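(* Let $f:\mathbf{M}\to\mathbf{M}$ be a measurable map preserving a probability measure $\mu$, and let $(U_n)_{n\ge1}$ be a nested sequence of measurable sets ($U_{n+1}\subset U_n$) with $\mu(U_n)>0$ for all $n$ and $\mu(U_n)\to0$. Assume that $\pi_{\operatorname{ess}}(U_n)\to\infty$ as $n\to\infty$. Then for every $\ell\ge2$ the limit $$\hat\alpha_\ell=\lim_{K\to\infty}\lim_{n\to\infty}\mu_{U_n}\big(\tau^{\ell-1}_{U_n}\le K\big)$$ exists and equals $0$.
   Context: For a measurable set $U$, the first entry time is $\tau_U(x)=\min\{j\ge1: f^j(x)\in U\}$; higher entry times are defined recursively by $\tau_U^1=\tau_U$, $\tau^j_U(x)=\tau^{j-1}_U(x)+\tau_U(f^{\tau^{j-1}_U(x)}(x))$, with the convention $\tau^0_U=0$. $\mu_U$ denotes the conditional measure $\mu_U(A)=\mu(A\cap U)/\mu(U)$. The essential period of a set $U$ of positive measure is $\pi_{\operatorname{ess}}(U)=\min\{k>0:\mu(f^{-k}U\cap U)>0\}$. *)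

theory Defs
  imports "HOL-Probability.Probability"
begin

definition entry_time :: "('a \<Rightarrow> 'a) \<Rightarrow> 'a set \<Rightarrow> 'a \<Rightarrow> enat" where
  "entry_time f U x =
     (if \<exists>j\<ge>1. (f ^^ j) x \<in> U then enat (LEAST j. j \<ge> 1 \<and> (f ^^ j) x \<in> U) else \<infinity>)"

fun higher_entry_time :: "('a \<Rightarrow> 'a) \<Rightarrow> 'a set \<Rightarrow> nat \<Rightarrow> 'a \<Rightarrow> enat" where
  "higher_entry_time f U 0 x = 0"
| "higher_entry_time f U (Suc j) x =
     (case higher_entry_time f U j x of
        \<infinity> \<Rightarrow> \<infinity>
      | enat t \<Rightarrow> enat t + entry_time f U ((f ^^ t) x))"

definition cond_measure :: "'a measure \<Rightarrow> 'a set \<Rightarrow> 'a set \<Rightarrow> real" where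
  "cond_measure M U A = measure M (A \<inter> U) / measure M U"

definition ess_period :: "'a measure \<Rightarrow> ('a \<Rightarrow> 'a) \<Rightarrow> 'a set \<Rightarrow> nat" where
  "ess_period M f U = (LEAST k. k > 0 \<and> measure M ((f ^^ k) -` U \<inter> space M \<inter> U) > 0)"

end

theory Submission
  imports Defs
begin

text \<open>The event that the (l-1)-st return to U happens within K steps is contained in the event
  that the first return happens within K steps. Up to a null set the latter is the union of the
  sets f^-k U \<inter> U for 1 \<le> k \<le> K, which are all null once K is below the essential period of U.
  Hence the inner limits are eventually 0 for every K.\<close>

lemma higher_entry_time_Suc_ge: "higher_entry_time f U j x \<le> higher_entry_time f U (Suc j) x"
  by (cases "higher_entry_time f U j x") auto

lemma entry_time_le_higher_entry_time:
  assumes "j \<ge> 1"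
  shows "entry_time f U x \<le> higher_entry_time f U j x"
  using assms
proof (induction j)
  case 0
  then show ?case by simp
next
  case (Suc j)
  show ?case
  proof (cases "j = 0")
    case True
    then show ?thesis by (simp add: zero_enat_def)
  next
    case False
    then have "entry_time f U x \<le> higher_entry_time f U j x" using Suc by simp
    also have "\<dots> \<le> higher_entry_time f U (Suc j) x" by (rule higher_entry_time_Suc_ge)
    finally show ?thesis .
  qed
qed

lemma entry_time_le_enatD:
  assumes "entry_time f U x \<le> enat K"
  obtains k where "k \<in> {1..K}" "(f ^^ k) x \<in> U"
proof -
  have ex: "\<exists>j\<ge>1. (f ^^ j) x \<in> U"
    using assms unfolding entry_time_def by (auto split: if_splits)
  define j where "j = (LEAST j. j \<ge> 1 \<and> (f ^^ j) x \<in> U)"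
  have "j \<ge> 1 \<and> (f ^^ j) x \<in> U" unfolding j_def using ex by (rule LeastI_ex)
  moreover have "j \<le> K" using assms ex unfolding entry_time_def j_def by auto
  ultimately show ?thesis using that by auto
qed

lemma measure_return_eq_0_below_ess_period:
  assumes "0 < k" "k < ess_period M f U"
  shows "measure M ((f ^^ k) -` U \<inter> space M \<inter> U) = 0"
proof (rule ccontr)
  assume "measure M ((f ^^ k) -` U \<inter> space M \<inter> U) \<noteq> 0"
  then have "measure M ((f ^^ k) -` U \<inter> space M \<inter> U) > 0"
    using measure_nonneg[of M] by (simp add: order_less_le)
  then have "ess_period M f U \<le> k"
    unfolding ess_period_def using assms(1) by (intro Least_le) simp
  with assms(2) show False by simp
qed

lemma returns_below_ess_period_null:
  assumes "finite_measure M" "f \<in> measurable M M" "U \<in> sets M" "K < ess_period M f U"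
  shows "(\<Union>k\<in>{1..K}. (f ^^ k) -` U \<inter> space M \<inter> U) \<in> null_sets M"
proof (rule null_sets_UN')
  fix k :: nat
  assume k: "k \<in> {1..K}"
  have "(f ^^ k) -` U \<inter> space M \<inter> U \<in> sets M"
    using measurable_sets[OF measurable_compose_n[OF assms(2)] assms(3)] assms(3) by blast
  moreover have "measure M ((f ^^ k) -` U \<inter> space M \<inter> U) = 0"
    using k assms(4) by (intro measure_return_eq_0_below_ess_period) auto
  ultimately show "(f ^^ k) -` U \<inter> space M \<inter> U \<in> null_sets M"
    by (simp add: finite_measure.emeasure_eq_measure[OF assms(1)] null_sets_def)
qed simp

lemma cond_measure_higher_entry_time_le_below_ess_period:
  assumes "finite_measure M" "f \<in> measurable M M" "U \<in> sets M" "K < ess_period M f U" "j \<ge> 1"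
  shows "cond_measure M U {x \<in> space M. higher_entry_time f U j x \<le> enat K} = 0"
proof -
  let ?A = "{x \<in> space M. higher_entry_time f U j x \<le> enat K} \<inter> U"
  let ?N = "\<Union>k\<in>{1..K}. (f ^^ k) -` U \<inter> space M \<inter> U"
  have "?A \<subseteq> ?N"
  proof
    fix x
    assume x: "x \<in> ?A"
    have "entry_time f U x \<le> higher_entry_time f U j x"
      using assms(5) by (rule entry_time_le_higher_entry_time)
    also have "\<dots> \<le> enat K" using x by simp
    finally have "entry_time f U x \<le> enat K" .
    then obtain k where "k \<in> {1..K}" "(f ^^ k) x \<in> U" by (rule entry_time_le_enatD)
    with x show "x \<in> ?N" by auto
  qed
  moreover have "?N \<in> null_sets M"
    using assms(1-4) by (rule returns_below_ess_period_null)
  ultimately have "emeasure M ?A = 0"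
    by (meson emeasure_eq_0 null_setsD1 null_setsD2)
  then show ?thesis by (simp add: cond_measure_def measure_def)
qed

theorem lemma3p1:
  fixes M :: "'a measure" and f :: "'a \<Rightarrow> 'a" and U :: "nat \<Rightarrow> 'a set" and l :: nat
  assumes "prob_space M"
    and "f \<in> measurable M M" and "distr M M f = M"
    and "\<And>n. U n \<in> sets M"
    and "\<And>n. U (Suc n) \<subseteq> U n"
    and "\<And>n. measure M (U n) > 0"
    and "(\<lambda>n. measure M (U n)) \<longlonglongrightarrow> 0"
    and "filterlim (\<lambda>n. ess_period M f (U n)) at_top sequentially"
    and "l \<ge> 2"
  shows "\<exists>g :: nat \<Rightarrow> real.
           (\<forall>K. (\<lambda>n. cond_measure M (U n)
                   {x \<in> space M. higher_entry_time f (U n) (l - 1) x \<le> enat K}) \<longlonglongrightarrow> g K)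
           \<and> g \<longlonglongrightarrow> 0"
proof (intro exI[of _ "\<lambda>_. 0"] conjI allI)
  fix K
  have "finite_measure M"
    using assms(1) by (rule prob_space.finite_measure)
  have "\<forall>\<^sub>F n in sequentially. K < ess_period M f (U n)"
    using assms(8) unfolding filterlim_at_top by (auto elim!: allE[of _ "Suc K"] eventually_mono)
  then have "\<forall>\<^sub>F n in sequentially. cond_measure M (U n)
      {x \<in> space M. higher_entry_time f (U n) (l - 1) x \<le> enat K} = 0"
    by eventually_elim
      (use \<open>finite_measure M\<close> assms(2,4,9) in
        \<open>simp add: cond_measure_higher_entry_time_le_below_ess_period\<close>)
  then show "(\<lambda>n. cond_measure M (U n)
      {x \<in> space M. higher_entry_time f (U n) (l - 1) x \<le> enat K}) \<longlonglongrightarrow> 0"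
    by (rule tendsto_eventually)
qed simp

end
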